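(* Let $X$ be an order continuous rearrangement invariant space with the Fatou property and let $F$ be an Orlicz function. Suppose that the Cesàro operator $C$ is bounded on the Calderón–Lozanovskiĭ space $X_F$. If the Cesàro space $C(X_F)$ contains a lattice isometric copy of $\ell_\infty$, then $X_F$ also contains a lattice isometric copy of $\ell_\infty$.
   Context: Rearrangement invariant spaces are on $(0,1)$, $(0,\infty)$ (Lebesgue measure) or $\mathbb N$ (counting measure): Banach spaces $X\subset L_0$ with the ideal property ($|f|\le|g|$, $g\in X$ imply $f\in X$, $\|f\|_X\le\|g\|_X$), containing an a.e. positive element, with equal norms for equimeasurable elements. Order continuous: for every $f\in X$, $0\le f_n\le|f|$, $f_n\downarrow0$ a.e. imply $\|f_n\|_X\to0$. Fatou property: $0\le f_n\uparrow f$, $\sup\|f_n\|_X<\infty$ imply $f\in X$ and $\|f_n\|_X\uparrow\|f\|_X$. An Orlicz function is a non-decreasing convex $F:[0,\infty)\to[0,\infty]$ with $F(0)=0$; $X_F=\{f:\|f\|_{X_F}<\infty\}$ with $\|f\|_{X_F}=\inf\{\lambda>0:\|F(|f|/\lambda)\|_X\le1\}$. The Cesàro operator is $C(f)(x)=\frac1x\int_0^x|f|$ (function case) or $C(x)_n=\frac1n\sum_{k=1}^nx_k$ (sequence case), and $C(X_F)=\{f:C(|f|)\in X_F\}$ with norm $\|C(|f|)\|_{X_F}$. A lattice isometric copy of $\ell_\infty$ is the image of a linear isometric lattice-homomorphic embedding of $\ell_\infty$. *)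

theory Defs
  imports "HOL-Analysis.Analysis"
begin

text \<open>A function norm rho on L_0(M) with values in [0,\<infinity>]; the space X is
  the set of measurable f with rho f < \<infinity>, and rho restricted to X is the norm of X.\<close>

definition in_space :: "'a measure \<Rightarrow> (('a \<Rightarrow> real) \<Rightarrow> ennreal) \<Rightarrow> ('a \<Rightarrow> real) \<Rightarrow> bool" where
  "in_space M \<rho> f \<longleftrightarrow> f \<in> borel_measurable M \<and> \<rho> f < \<infinity>"

definition equimeasurable :: "'a measure \<Rightarrow> ('a \<Rightarrow> real) \<Rightarrow> ('a \<Rightarrow> real) \<Rightarrow> bool" where
  "equimeasurable M f g \<longleftrightarrow>
     (\<forall>t::real. emeasure M {x \<in> space M. t < \<bar>f x\<bar>} = emeasure M {x \<in> space M. t < \<bar>g x\<bar>})"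

definition ri_space :: "'a measure \<Rightarrow> (('a \<Rightarrow> real) \<Rightarrow> ennreal) \<Rightarrow> bool" where
  "ri_space M \<rho> \<longleftrightarrow>
     \<comment> \<open>norm axioms\<close>
     (\<forall>f \<in> borel_measurable M. \<rho> f = 0 \<longleftrightarrow> (AE x in M. f x = 0)) \<and>
     (\<forall>f \<in> borel_measurable M. \<forall>c::real. \<rho> (\<lambda>x. c * f x) = ennreal \<bar>c\<bar> * \<rho> f) \<and>
     (\<forall>f \<in> borel_measurable M. \<forall>g \<in> borel_measurable M. \<rho> (\<lambda>x. f x + g x) \<le> \<rho> f + \<rho> g) \<and>
     \<comment> \<open>completeness (Banach space)\<close>
     (\<forall>u :: nat \<Rightarrow> 'a \<Rightarrow> real. (\<forall>n. in_space M \<rho> (u n)) \<and>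
        (\<forall>e>0. \<exists>N. \<forall>m\<ge>N. \<forall>n\<ge>N. \<rho> (\<lambda>x. u m x - u n x) < ennreal e) \<longrightarrow>
        (\<exists>f. in_space M \<rho> f \<and> (\<lambda>n. \<rho> (\<lambda>x. u n x - f x)) \<longlonglongrightarrow> 0)) \<and>
     \<comment> \<open>ideal property\<close>
     (\<forall>f \<in> borel_measurable M. \<forall>g \<in> borel_measurable M.
        (AE x in M. \<bar>f x\<bar> \<le> \<bar>g x\<bar>) \<longrightarrow> \<rho> f \<le> \<rho> g) \<and>
     \<comment> \<open>contains an a.e. positive element\<close>
     (\<exists>f. in_space M \<rho> f \<and> (AE x in M. 0 < f x)) \<and>
     \<comment> \<open>rearrangement invariance\<close>
     (\<forall>f \<in> borel_measurable M. \<forall>g \<in> borel_measurable M.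
        equimeasurable M f g \<longrightarrow> \<rho> f = \<rho> g)"

definition order_continuous :: "'a measure \<Rightarrow> (('a \<Rightarrow> real) \<Rightarrow> ennreal) \<Rightarrow> bool" where
  "order_continuous M \<rho> \<longleftrightarrow>
     (\<forall>f (u :: nat \<Rightarrow> 'a \<Rightarrow> real). in_space M \<rho> f \<and> (\<forall>n. u n \<in> borel_measurable M) \<and>
        (AE x in M. \<forall>n. 0 \<le> u n x \<and> u n x \<le> \<bar>f x\<bar> \<and> u (Suc n) x \<le> u n x) \<and>
        (AE x in M. (\<lambda>n. u n x) \<longlonglongrightarrow> 0)
        \<longrightarrow> (\<lambda>n. \<rho> (u n)) \<longlonglongrightarrow> 0)"

definition fatou_property :: "'a measure \<Rightarrow> (('a \<Rightarrow> real) \<Rightarrow> ennreal) \<Rightarrow> bool" where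
  "fatou_property M \<rho> \<longleftrightarrow>
     (\<forall>f (u :: nat \<Rightarrow> 'a \<Rightarrow> real). f \<in> borel_measurable M \<and> (\<forall>n. u n \<in> borel_measurable M) \<and>
        (AE x in M. \<forall>n. 0 \<le> u n x \<and> u n x \<le> u (Suc n) x) \<and>
        (AE x in M. (\<lambda>n. u n x) \<longlonglongrightarrow> f x) \<and>
        (SUP n. \<rho> (u n)) < \<infinity>
        \<longrightarrow> \<rho> f < \<infinity> \<and> incseq (\<lambda>n. \<rho> (u n)) \<and> (\<lambda>n. \<rho> (u n)) \<longlonglongrightarrow> \<rho> f)"

text \<open>Orlicz function F : [0,\<infinity>) \<rightarrow> [0,\<infinity>] (values on negative reals are irrelevant).\<close>
definition orlicz :: "(real \<Rightarrow> ennreal) \<Rightarrow> bool" where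
  "orlicz F \<longleftrightarrow> F 0 = 0 \<and>
     (\<forall>x y. 0 \<le> x \<longrightarrow> x \<le> y \<longrightarrow> F x \<le> F y) \<and>
     (\<forall>x y t. 0 \<le> x \<longrightarrow> 0 \<le> y \<longrightarrow> 0 \<le> t \<longrightarrow> t \<le> 1 \<longrightarrow>
        F ((1 - t) * x + t * y) \<le> ennreal (1 - t) * F x + ennreal t * F y)"

definition ennfun_norm :: "'a measure \<Rightarrow> (('a \<Rightarrow> real) \<Rightarrow> ennreal) \<Rightarrow> ('a \<Rightarrow> ennreal) \<Rightarrow> ennreal" where
  "ennfun_norm M \<rho> g = (if AE x in M. g x \<noteq> \<infinity> then \<rho> (\<lambda>x. enn2real (g x)) else \<infinity>)"

definition CL_norm :: "'a measure \<Rightarrow> (('a \<Rightarrow> real) \<Rightarrow> ennreal) \<Rightarrow> (real \<Rightarrow> ennreal) \<Rightarrow> ('a \<Rightarrow> real) \<Rightarrow> ennreal" where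
  "CL_norm M \<rho> F f = Inf {ennreal l | l. 0 < l \<and> ennfun_norm M \<rho> (\<lambda>x. F (\<bar>f x\<bar> / l)) \<le> 1}"

definition cesaro_fun :: "(real \<Rightarrow> real) \<Rightarrow> real \<Rightarrow> ennreal" where
  "cesaro_fun f x = (\<integral>\<^sup>+ t. ennreal \<bar>f t\<bar> * indicator {0<..x} t \<partial>lebesgue) / ennreal x"

text \<open>Cesaro operator applied to |x|, sequence case (index n here stands for n+1).\<close>
definition cesaro_seq :: "(nat \<Rightarrow> real) \<Rightarrow> nat \<Rightarrow> ennreal" where
  "cesaro_seq f n = ennreal ((\<Sum>k\<le>n. \<bar>f k\<bar>) / real (Suc n))"

definition cesaro_bounded ::
  "'a measure \<Rightarrow> (('a \<Rightarrow> real) \<Rightarrow> 'a \<Rightarrow> ennreal) \<Rightarrow> (('a \<Rightarrow> real) \<Rightarrow> ennreal) \<Rightarrow> bool" where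
  "cesaro_bounded M Ces N \<longleftrightarrow>
     (\<exists>K::real. \<forall>f. in_space M N f \<longrightarrow> ennfun_norm M N (Ces f) \<le> ennreal K * N f)"

definition cesaro_norm ::
  "'a measure \<Rightarrow> (('a \<Rightarrow> real) \<Rightarrow> 'a \<Rightarrow> ennreal) \<Rightarrow> (('a \<Rightarrow> real) \<Rightarrow> ennreal) \<Rightarrow> ('a \<Rightarrow> real) \<Rightarrow> ennreal" where
  "cesaro_norm M Ces N f = ennfun_norm M N (Ces f)"

text \<open>The space {f measurable. N f < \<infinity>} (pointwise a.e. order) contains a lattice
  isometric copy of l_\<infinity>: a linear, lattice homomorphic, isometric map from l_\<infinity>.\<close>
definition lattice_iso_linfty :: "'a measure \<Rightarrow> (('a \<Rightarrow> real) \<Rightarrow> ennreal) \<Rightarrow> bool" where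
  "lattice_iso_linfty M N \<longleftrightarrow>
     (\<exists>T :: (nat \<Rightarrow> real) \<Rightarrow> 'a \<Rightarrow> real.
        (\<forall>a. bounded (range a) \<longrightarrow>
           T a \<in> borel_measurable M \<and> N (T a) = ennreal (SUP n. \<bar>a n\<bar>)) \<and>
        (\<forall>a b. bounded (range a) \<longrightarrow> bounded (range b) \<longrightarrow>
           (AE x in M. T (\<lambda>n. a n + b n) x = T a x + T b x)) \<and>
        (\<forall>a c. bounded (range a) \<longrightarrow> (AE x in M. T (\<lambda>n. c * a n) x = c * T a x)) \<and>
        (\<forall>a b. bounded (range a) \<longrightarrow> bounded (range b) \<longrightarrow>
           (AE x in M. T (\<lambda>n. max (a n) (b n)) x = max (T a x) (T b x))))"

end

theory Submission
  imports Defs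
begin

(* A lattice isometric copy of l_inf in C(X_F) yields pairwise disjoint functions 0 <= f_k <= g
   with ||C f_k|| = ||C g|| = 1.  Cutting g down to the supports of f_n, f_(n+1), ... gives
   r_n decreasing to 0 with f_n <= r_n <= g, so by dominated convergence w = C g and u_n = C r_n
   satisfy 0 <= u_n <= w, u_n decreasing to 0 pointwise, and ||w|| <= 1 <= ||u_n|| in X_F.

   Such a sequence produces l_inf in X_F.  Order continuity of X makes the modular of u_n infinite
   at every level l < 1, hence also the modular of w on the sets {u_n > w/3} when 1/3 < l < 1; the
   Fatou property then cuts w into disjoint pieces w 1_(P_j) whose modular at levels L_j -> 1
   exceeds 1.  Spreading each coordinate of a in l_inf over infinitely many pieces,
   T a = sum_j a_(k(j)) w 1_(P_j) is a lattice isometry into X_F. *)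

lemma borel_measurable_mono_real:
  fixes h :: "real \<Rightarrow> 'b::{linorder_topology, second_countable_topology}"
  assumes "mono h"
  shows "h \<in> borel_measurable borel"
proof (rule borel_measurableI_less)
  fix y
  define D where "D = {t. h t < y}"
  have down: "s \<in> D" if "s \<le> t" "t \<in> D" for s t
    using that monoD[OF assms] unfolding D_def by (fastforce intro: le_less_trans)
  consider "D = UNIV" | "D = {}" | t where "t \<notin> D" "D \<noteq> {}" by blast
  then have "D \<in> sets borel"
  proof cases
    case (3 t)
    have bdd: "bdd_above D"
      using 3 down by (metis bdd_aboveI nle_le)
    have "D = {..<Sup D} \<or> D = {..Sup D}"
    proof (cases "Sup D \<in> D")
      case True
      then have "D = {..Sup D}" using bdd down by (auto intro: cSup_upper)
      then show ?thesis ..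
    next
      case False
      have "D = {..<Sup D}"
      proof safe
        fix s assume "s \<in> D"
        then show "s < Sup D" using False bdd cSup_upper[of s D] by (cases "s = Sup D") auto
      next
        fix s assume "s < Sup D"
        then obtain t where "t \<in> D" "s < t" using less_cSup_iff[OF \<open>D \<noteq> {}\<close> bdd] by blast
        then show "s \<in> D" using down less_imp_le by blast
      qed
      then show ?thesis ..
    qed
    then show ?thesis by (metis borel_open borel_closed open_lessThan closed_atMost)
  qed simp_all
  then show "{x \<in> space borel. h x < y} \<in> sets borel" by (simp add: D_def)
qed

lemma ennfun_norm_mono:
  assumes ideal: "\<And>f g. f \<in> borel_measurable M \<Longrightarrow> g \<in> borel_measurable M \<Longrightarrow>
       (AE x in M. \<bar>f x\<bar> \<le> \<bar>g x\<bar>) \<Longrightarrow> N f \<le> N g"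
    and a: "a \<in> borel_measurable M" and b: "b \<in> borel_measurable M"
    and ab: "AE x in M. a x \<le> b x"
  shows "ennfun_norm M N a \<le> ennfun_norm M N b"
proof (cases "AE x in M. b x \<noteq> \<infinity>")
  case True
  then have a_fin: "AE x in M. a x \<noteq> \<infinity>" using ab by eventually_elim (auto simp: top_unique)
  have "N (\<lambda>x. enn2real (a x)) \<le> N (\<lambda>x. enn2real (b x))"
  proof (rule ideal)
    show "AE x in M. \<bar>enn2real (a x)\<bar> \<le> \<bar>enn2real (b x)\<bar>"
      using True ab by eventually_elim (auto intro!: enn2real_mono simp: less_top)
  qed (use a b in measurable)
  then show ?thesis using True a_fin by (simp add: ennfun_norm_def)
qed (simp add: ennfun_norm_def)

lemma ennfun_norm_finiteD:
  assumes "ennfun_norm M N g \<noteq> \<infinity>"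
  shows "AE x in M. g x \<noteq> \<infinity>" "ennfun_norm M N g = N (\<lambda>x. enn2real (g x))"
  using assms by (auto simp: ennfun_norm_def split: if_splits)

section \<open>The Calderon--Lozanovskii modular and norm\<close>

definition CL_modular ::
  "'a measure \<Rightarrow> (('a \<Rightarrow> real) \<Rightarrow> ennreal) \<Rightarrow> (real \<Rightarrow> ennreal) \<Rightarrow> ('a \<Rightarrow> real) \<Rightarrow> real \<Rightarrow> ennreal" where
  "CL_modular M \<rho> F f l = ennfun_norm M \<rho> (\<lambda>x. F (\<bar>f x\<bar> / l))"

lemma CL_norm_eq_Inf_modular:
  "CL_norm M \<rho> F f = Inf {ennreal l | l. 0 < l \<and> CL_modular M \<rho> F f l \<le> 1}"
  by (simp add: CL_norm_def CL_modular_def)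

locale ri_orlicz =
  fixes M :: "'a measure" and \<rho> :: "('a \<Rightarrow> real) \<Rightarrow> ennreal" and F :: "real \<Rightarrow> ennreal"
  assumes ri_space: "ri_space M \<rho>" and orlicz: "orlicz F"
begin

lemma rho_mono:
  "f \<in> borel_measurable M \<Longrightarrow> g \<in> borel_measurable M \<Longrightarrow>
   (AE x in M. \<bar>f x\<bar> \<le> \<bar>g x\<bar>) \<Longrightarrow> \<rho> f \<le> \<rho> g"
  using ri_space unfolding ri_space_def by blast

lemma rho_triangle:
  "f \<in> borel_measurable M \<Longrightarrow> g \<in> borel_measurable M \<Longrightarrow> \<rho> (\<lambda>x. f x + g x) \<le> \<rho> f + \<rho> g"
  using ri_space unfolding ri_space_def by blast

lemma rho_zero: "\<rho> (\<lambda>x. 0) = 0"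
  using ri_space unfolding ri_space_def by auto

lemma F_zero: "F 0 = 0"
  using orlicz by (simp add: orlicz_def)

lemma F_mono: "0 \<le> s \<Longrightarrow> s \<le> t \<Longrightarrow> F s \<le> F t"
  using orlicz by (simp add: orlicz_def)

lemma borel_measurable_F_comp[measurable]:
  assumes p: "p \<in> borel_measurable N" and nonneg: "\<And>x. x \<in> space N \<Longrightarrow> 0 \<le> p x"
  shows "(\<lambda>x. F (p x)) \<in> borel_measurable N"
proof -
  have "mono (\<lambda>t. F (max 0 t))" by (auto intro!: monoI F_mono)
  then have "(\<lambda>x. F (max 0 (p x))) \<in> borel_measurable N"
    using measurable_compose[OF p borel_measurable_mono_real] by blast
  then show ?thesis by (rule measurable_cong[THEN iffD1, rotated]) (simp add: nonneg max_absorb2)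
qed

lemma F_le_scaled:
  assumes "0 \<le> t" "t \<le> s" "0 < s"
  shows "F t \<le> ennreal (t / s) * F s"
proof -
  have convex: "F ((1 - \<tau>) * x + \<tau> * y) \<le> ennreal (1 - \<tau>) * F x + ennreal \<tau> * F y"
    if "0 \<le> x" "0 \<le> y" "0 \<le> \<tau>" "\<tau> \<le> 1" for x y \<tau>
    using orlicz that unfolding orlicz_def by blast
  have "F ((1 - t/s) * 0 + (t/s) * s) \<le> ennreal (1 - t/s) * F 0 + ennreal (t/s) * F s"
    by (rule convex) (use assms in auto)
  then show ?thesis using assms by (simp add: F_zero)
qed

lemma ennfun_norm_add:
  assumes a: "a \<in> borel_measurable M" and b: "b \<in> borel_measurable M"
  shows "ennfun_norm M \<rho> (\<lambda>x. a x + b x) \<le> ennfun_norm M \<rho> a + ennfun_norm M \<rho> b"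
proof (cases "(AE x in M. a x \<noteq> \<infinity>) \<and> (AE x in M. b x \<noteq> \<infinity>)")
  case True
  then have a_fin: "AE x in M. a x \<noteq> \<infinity>" and b_fin: "AE x in M. b x \<noteq> \<infinity>" by auto
  have "\<rho> (\<lambda>x. enn2real (a x + b x)) \<le> \<rho> (\<lambda>x. enn2real (a x) + enn2real (b x))"
  proof (rule rho_mono)
    show "AE x in M. \<bar>enn2real (a x + b x)\<bar> \<le> \<bar>enn2real (a x) + enn2real (b x)\<bar>"
      using a_fin b_fin by eventually_elim (simp add: enn2real_plus less_top)
  qed (use a b in measurable)
  also have "\<dots> \<le> \<rho> (\<lambda>x. enn2real (a x)) + \<rho> (\<lambda>x. enn2real (b x))"
    by (rule rho_triangle) (use a b in measurable)
  finally show ?thesis using a_fin b_fin by (simp add: ennfun_norm_def)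
qed (auto simp: ennfun_norm_def)

lemma CL_modular_mono:
  assumes f: "f \<in> borel_measurable M" and g: "g \<in> borel_measurable M"
    and l: "0 < l" "0 < l'"
    and le: "\<And>x. x \<in> space M \<Longrightarrow> \<bar>f x\<bar> / l \<le> \<bar>g x\<bar> / l'"
  shows "CL_modular M \<rho> F f l \<le> CL_modular M \<rho> F g l'"
  unfolding CL_modular_def
  by (rule ennfun_norm_mono[OF rho_mono]) (use f g l le in \<open>auto intro!: F_mono\<close>)

lemma CL_modular_zero: "CL_modular M \<rho> F (\<lambda>x. 0) l = 0"
  by (simp add: CL_modular_def ennfun_norm_def F_zero rho_zero)

lemma CL_norm_mono:
  assumes f: "f \<in> borel_measurable M" and g: "g \<in> borel_measurable M"
    and le: "AE x in M. \<bar>f x\<bar> \<le> \<bar>g x\<bar>"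
  shows "CL_norm M \<rho> F f \<le> CL_norm M \<rho> F g"
  unfolding CL_norm_eq_Inf_modular
proof (rule Inf_superset_mono, safe)
  fix l assume l: "0 < l" "CL_modular M \<rho> F g l \<le> 1"
  have "CL_modular M \<rho> F f l \<le> CL_modular M \<rho> F g l"
    unfolding CL_modular_def
  proof (rule ennfun_norm_mono[OF rho_mono])
    show "AE x in M. F (\<bar>f x\<bar> / l) \<le> F (\<bar>g x\<bar> / l)"
      using le by eventually_elim (use l in \<open>auto intro!: F_mono divide_right_mono\<close>)
  qed (use f g l in auto)
  then show "\<exists>l'. ennreal l = ennreal l' \<and> 0 < l' \<and> CL_modular M \<rho> F f l' \<le> 1"
    using l by auto
qed

lemma CL_norm_cong:
  "f \<in> borel_measurable M \<Longrightarrow> g \<in> borel_measurable M \<Longrightarrow> (AE x in M. f x = g x) \<Longrightarrow>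
   CL_norm M \<rho> F f = CL_norm M \<rho> F g"
  by (rule antisym; rule CL_norm_mono) (auto elim: AE_mp)

lemma CL_norm_le_if_modular_le_1:
  "0 < l \<Longrightarrow> CL_modular M \<rho> F f l \<le> 1 \<Longrightarrow> CL_norm M \<rho> F f \<le> ennreal l"
  unfolding CL_norm_eq_Inf_modular by (rule Inf_lower) auto

lemma CL_modular_le_1_if_norm_le_1:
  assumes f: "f \<in> borel_measurable M" and norm: "CL_norm M \<rho> F f \<le> 1" and l: "1 < l"
  shows "CL_modular M \<rho> F f l \<le> 1"
proof -
  have "Inf {ennreal l | l. 0 < l \<and> CL_modular M \<rho> F f l \<le> 1} < ennreal l"
    using norm l by (simp add: CL_norm_eq_Inf_modular[symmetric] le_less_trans)
  then obtain l' where l': "0 < l'" "CL_modular M \<rho> F f l' \<le> 1" "ennreal l' < ennreal l"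
    unfolding Inf_less_iff by auto
  then have "l' < l" by (simp add: ennreal_less_iff)
  have "CL_modular M \<rho> F f l \<le> CL_modular M \<rho> F f l'"
    by (rule CL_modular_mono[OF f f]) (use l l' \<open>l' < l\<close> in \<open>auto intro!: divide_left_mono\<close>)
  then show ?thesis using l' by simp
qed

lemma CL_norm_geI:
  assumes "\<And>l. 0 < l \<Longrightarrow> l < c \<Longrightarrow> 1 < CL_modular M \<rho> F f l"
  shows "ennreal c \<le> CL_norm M \<rho> F f"
  unfolding CL_norm_eq_Inf_modular
proof (rule Inf_greatest, safe)
  fix l assume "0 < l" "CL_modular M \<rho> F f l \<le> 1"
  then show "ennreal c \<le> ennreal l" using assms by (meson ennreal_leI not_le)
qed

lemma CL_norm_leI:
  assumes "0 \<le> c" "\<And>l. c < l \<Longrightarrow> CL_modular M \<rho> F f l \<le> 1"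
  shows "CL_norm M \<rho> F f \<le> ennreal c"
proof (rule ennreal_le_epsilon)
  fix e :: real assume e: "0 < e"
  have "CL_norm M \<rho> F f \<le> ennreal (c + e)"
    by (rule CL_norm_le_if_modular_le_1) (use assms e in auto)
  then show "CL_norm M \<rho> F f \<le> ennreal c + ennreal e"
    using assms e by (simp add: ennreal_plus)
qed

section \<open>Lattice copies of \<open>\<ell>\<^sub>\<infinity>\<close> from disjoint pieces\<close>

lemma CL_norm_le_if_dominated:
  assumes w: "w \<in> borel_measurable M" and w_norm: "CL_norm M \<rho> F w \<le> 1"
    and h: "h \<in> borel_measurable M" and s: "0 \<le> s"
    and dom: "\<And>x. x \<in> space M \<Longrightarrow> \<bar>h x\<bar> \<le> s * \<bar>w x\<bar>"
  shows "CL_norm M \<rho> F h \<le> ennreal s"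
proof (rule CL_norm_leI[OF s])
  fix l assume l: "s < l"
  show "CL_modular M \<rho> F h l \<le> 1"
  proof (cases "s = 0")
    case True
    have "CL_modular M \<rho> F h l \<le> CL_modular M \<rho> F (\<lambda>x. 0) 1"
      by (rule CL_modular_mono[OF h]) (use l True dom in auto)
    then show ?thesis by (simp add: CL_modular_zero)
  next
    case False
    with s have s_pos: "0 < s" by simp
    have "CL_modular M \<rho> F h l \<le> CL_modular M \<rho> F w (l / s)"
    proof (rule CL_modular_mono[OF h w])
      fix x assume "x \<in> space M"
      then have "\<bar>h x\<bar> / l \<le> s * \<bar>w x\<bar> / l" using dom l s by (auto intro!: divide_right_mono)
      then show "\<bar>h x\<bar> / l \<le> \<bar>w x\<bar> / (l / s)" using s_pos by (simp add: mult.commute)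
    qed (use l s_pos in auto)
    also have "\<dots> \<le> 1" by (rule CL_modular_le_1_if_norm_le_1[OF w w_norm]) (use l s_pos in auto)
    finally show ?thesis .
  qed
qed

lemma CL_norm_ge_if_dominates:
  assumes g: "g \<in> borel_measurable M" and L: "0 < L" and modular: "1 < CL_modular M \<rho> F g L"
    and h: "h \<in> borel_measurable M" and c: "0 \<le> c"
    and dom: "\<And>x. x \<in> space M \<Longrightarrow> c * \<bar>g x\<bar> \<le> \<bar>h x\<bar>"
  shows "ennreal (c * L) \<le> CL_norm M \<rho> F h"
proof (rule CL_norm_geI)
  fix l assume l: "0 < l" "l < c * L"
  have "CL_modular M \<rho> F g L \<le> CL_modular M \<rho> F h l"
  proof (rule CL_modular_mono[OF g h L l(1)])
    fix x assume x: "x \<in> space M"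
    have "l * \<bar>g x\<bar> \<le> c * L * \<bar>g x\<bar>" using l by (auto intro!: mult_right_mono)
    also have "\<dots> \<le> L * \<bar>h x\<bar>" using dom[OF x] L by (simp add: mult.commute mult.left_commute)
    finally show "\<bar>g x\<bar> / L \<le> \<bar>h x\<bar> / l" using L l by (simp add: field_simps)
  qed
  with modular show "1 < CL_modular M \<rho> F h l" by simp
qed

lemma ennreal_le_CL_norm_if_dominates_pieces:
  assumes g: "\<And>i. g i \<in> borel_measurable M" and L_pos: "\<And>i. 0 < L i" and L_lim: "L \<longlonglongrightarrow> 1"
    and modular: "\<And>i. 1 < CL_modular M \<rho> F (g i) (L i)"
    and h: "h \<in> borel_measurable M" and c: "0 \<le> c"
    and dom: "\<And>i x. x \<in> space M \<Longrightarrow> c * \<bar>g i x\<bar> \<le> \<bar>h x\<bar>"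
  shows "ennreal c \<le> CL_norm M \<rho> F h"
proof (rule LIMSEQ_le_const2)
  have "(\<lambda>i. c * L i) \<longlonglongrightarrow> c * 1" by (intro tendsto_intros L_lim)
  then show "(\<lambda>i. ennreal (c * L i)) \<longlonglongrightarrow> ennreal c" by (intro tendsto_ennrealI) simp
  show "\<exists>N. \<forall>i\<ge>N. ennreal (c * L i) \<le> CL_norm M \<rho> F h"
    using CL_norm_ge_if_dominates[OF g L_pos modular h c dom] by blast
qed

text \<open>Give the coordinate \<open>k\<close> of \<open>\<ell>\<^sub>\<infinity>\<close> all pieces \<open>P j\<close> with \<open>j = prod_encode (k, i)\<close>:
  their levels \<open>L j\<close> tend to \<open>1\<close>, which forces the norm of \<open>T a\<close> up to \<open>\<bar>a k\<bar>\<close>.\<close>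

lemma lattice_iso_linfty_of_disjoint_pieces:
  assumes w[measurable]: "w \<in> borel_measurable M" and w_nonneg: "\<And>x. x \<in> space M \<Longrightarrow> 0 \<le> w x"
    and w_norm: "CL_norm M \<rho> F w \<le> 1"
    and P[measurable]: "\<And>j. P j \<in> sets M" and disj: "disjoint_family P"
    and L_pos: "\<And>j. 0 < L j" and L_lim: "L \<longlonglongrightarrow> 1"
    and piece: "\<And>j. 1 < CL_modular M \<rho> F (\<lambda>x. if x \<in> P j then w x else 0) (L j)"
  shows "lattice_iso_linfty M (CL_norm M \<rho> F)"
proof -
  define idx where "idx x = (LEAST j. x \<in> P j)" for x
  have idx: "idx x = j" if "x \<in> P j" for x j
    unfolding idx_def by (rule Least_equality) (use that disj in \<open>auto simp: disjoint_family_on_def dest: eq_refl\<close>)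
  define T where "T a x = (if x \<in> (\<Union>j. P j) then a (fst (prod_decode (idx x))) * w x else 0)"
    for a :: "nat \<Rightarrow> real" and x
  have T_measurable: "T a \<in> borel_measurable M" for a
    unfolding T_def idx_def by measurable
  have T_piece: "T a x = a (fst (prod_decode j)) * w x" if "x \<in> P j" for a x j
    using that idx[OF that] by (auto simp: T_def)
  have T_norm: "CL_norm M \<rho> F (T a) = ennreal (SUP n. \<bar>a n\<bar>)" if "bounded (range a)" for a
  proof -
    define s where "s = (SUP n. \<bar>a n\<bar>)"
    have bdd: "bdd_above (range (\<lambda>n. \<bar>a n\<bar>))"
      using \<open>bounded (range a)\<close> unfolding bounded_iff bdd_above_def by auto
    have a_le: "\<bar>a k\<bar> \<le> s" for k unfolding s_def by (rule cSUP_upper[OF _ bdd]) simp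
    have upper: "CL_norm M \<rho> F (T a) \<le> ennreal s"
    proof (rule CL_norm_le_if_dominated[OF w w_norm T_measurable])
      show "0 \<le> s" using a_le[of 0] by simp
      fix x assume x: "x \<in> space M"
      show "\<bar>T a x\<bar> \<le> s * \<bar>w x\<bar>"
        using a_le w_nonneg[OF x] \<open>0 \<le> s\<close>
        by (cases "x \<in> (\<Union>j. P j)") (auto simp: T_def abs_mult intro: mult_right_mono)
    qed
    then obtain c where c: "CL_norm M \<rho> F (T a) = ennreal c" "0 \<le> c"
      by (cases "CL_norm M \<rho> F (T a)" rule: ennreal_cases) (auto simp: top_unique)
    have "ennreal \<bar>a k\<bar> \<le> CL_norm M \<rho> F (T a)" for k
    proof (rule ennreal_le_CL_norm_if_dominates_pieces[OF _ L_pos[of "prod_encode (k, i)" for i]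
          _ piece T_measurable])
      show "(\<lambda>i. L (prod_encode (k, i))) \<longlonglongrightarrow> 1"
        by (rule filterlim_compose[OF L_lim filterlim_at_top_mono[OF filterlim_ident]])
          (simp add: le_prod_encode_2)
      show "\<bar>a k\<bar> * \<bar>if x \<in> P (prod_encode (k, i)) then w x else 0\<bar> \<le> \<bar>T a x\<bar>" for i x
        using T_piece[of x "prod_encode (k, i)" a] by (simp add: abs_mult)
    qed auto
    then have "s \<le> c" unfolding s_def using c by (intro cSUP_least) auto
    with upper c show ?thesis by (metis antisym ennreal_leI s_def)
  qed
  show ?thesis
    unfolding lattice_iso_linfty_def
  proof (intro exI[of _ T] conjI allI impI)
    fix a b :: "nat \<Rightarrow> real" and c :: real
    show "AE x in M. T (\<lambda>n. a n + b n) x = T a x + T b x"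
      by (rule AE_I2) (simp add: T_def distrib_right)
    show "AE x in M. T (\<lambda>n. c * a n) x = c * T a x"
      by (rule AE_I2) (simp add: T_def)
    show "AE x in M. T (\<lambda>n. max (a n) (b n)) x = max (T a x) (T b x)"
      by (rule AE_I2) (simp add: T_def max_mult_distrib_right w_nonneg)
  qed (use T_measurable T_norm in auto)
qed

lemma enn2real_F_tendsto_0:
  assumes t: "\<And>n. 0 \<le> t n" "\<And>n. t n \<le> s" and F_fin: "F s \<noteq> \<infinity>" and lim: "t \<longlonglongrightarrow> 0"
  shows "(\<lambda>n. enn2real (F (t n))) \<longlonglongrightarrow> 0"
proof (cases "s = 0")
  case True
  then have "t n = 0" for n using t by (metis order_antisym)
  then show ?thesis by (simp add: F_zero)
next
  case False
  with t have s: "0 < s" by (metis order.trans order.not_eq_order_implies_strict)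
  have bound: "enn2real (F (t n)) \<le> t n / s * enn2real (F s)" for n
  proof -
    have "F (t n) \<le> ennreal (t n / s) * F s" by (rule F_le_scaled) (use t s in auto)
    then have "enn2real (F (t n)) \<le> enn2real (ennreal (t n / s) * F s)"
      using F_fin by (intro enn2real_mono) (auto simp: ennreal_mult_less_top less_top)
    also have "\<dots> = t n / s * enn2real (F s)" using t s by (simp add: enn2real_mult)
    finally show ?thesis .
  qed
  have "(\<lambda>n. t n / s * enn2real (F s)) \<longlonglongrightarrow> 0 / s * enn2real (F s)"
    using s by (intro tendsto_intros lim) simp
  then have bound_lim: "(\<lambda>n. t n / s * enn2real (F s)) \<longlonglongrightarrow> 0" by simp
  show ?thesis by (rule tendsto_sandwich[OF _ _ tendsto_const bound_lim]) (use bound in auto)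
qed

lemma CL_modular_tendsto_0:
  assumes oc: "order_continuous M \<rho>" and l: "0 < l"
    and f: "f \<in> borel_measurable M" and fin: "CL_modular M \<rho> F f l \<noteq> \<infinity>"
    and g: "\<And>n. g n \<in> borel_measurable M"
    and dom: "\<And>n x. x \<in> space M \<Longrightarrow> \<bar>g n x\<bar> \<le> \<bar>f x\<bar>"
    and dec: "\<And>n x. x \<in> space M \<Longrightarrow> \<bar>g (Suc n) x\<bar> \<le> \<bar>g n x\<bar>"
    and lim: "\<And>x. x \<in> space M \<Longrightarrow> (\<lambda>n. g n x) \<longlonglongrightarrow> 0"
  shows "(\<lambda>n. CL_modular M \<rho> F (g n) l) \<longlonglongrightarrow> 0"
proof -
  define h where "h = (\<lambda>x. enn2real (F (\<bar>f x\<bar> / l)))"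
  define v where "v n = (\<lambda>x. enn2real (F (\<bar>g n x\<bar> / l)))" for n
  have f_fin: "AE x in M. F (\<bar>f x\<bar> / l) \<noteq> \<infinity>" and rho_h: "CL_modular M \<rho> F f l = \<rho> h"
    using ennfun_norm_finiteD[OF fin[unfolded CL_modular_def]] by (auto simp: CL_modular_def h_def)
  have h: "h \<in> borel_measurable M"
    unfolding h_def by (intro borel_measurable_enn2real borel_measurable_F_comp) (use f l in auto)
  with fin rho_h have h_in: "in_space M \<rho> h" by (simp add: in_space_def less_top)
  have v: "v n \<in> borel_measurable M" for n
    unfolding v_def by (intro borel_measurable_enn2real borel_measurable_F_comp) (use g l in auto)
  have F_le: "F (\<bar>g n x\<bar> / l) \<le> F (\<bar>g m x\<bar> / l)" if "x \<in> space M" "m \<le> n" for x m n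
  proof -
    have "\<bar>g n x\<bar> \<le> \<bar>g m x\<bar>"
      using lift_Suc_antimono_le[of "\<lambda>n. \<bar>g n x\<bar>"] dec that by blast
    then show ?thesis using l by (intro F_mono divide_right_mono) auto
  qed
  have F_le_f: "F (\<bar>g n x\<bar> / l) \<le> F (\<bar>f x\<bar> / l)" if "x \<in> space M" for x n
    using dom[OF that] l by (intro F_mono divide_right_mono) auto
  have "AE x in M. \<forall>n. 0 \<le> v n x \<and> v n x \<le> \<bar>h x\<bar> \<and> v (Suc n) x \<le> v n x"
    using AE_space f_fin
  proof eventually_elim
    case (elim x)
    have "F (\<bar>g n x\<bar> / l) \<noteq> \<infinity>" for n using F_le_f[OF elim(1), of n] elim(2) by (auto simp: top_unique)
    then show ?case
      using F_le_f[OF elim(1)] F_le[OF elim(1)] elim(2)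
      by (auto simp: v_def h_def intro!: enn2real_mono simp: less_top)
  qed
  moreover have "AE x in M. (\<lambda>n. v n x) \<longlonglongrightarrow> 0"
    using AE_space f_fin
  proof eventually_elim
    case (elim x)
    have "(\<lambda>n. \<bar>g n x\<bar> / l) \<longlonglongrightarrow> \<bar>0\<bar> / l"
      using l by (intro tendsto_intros lim[OF elim(1)]) simp
    then have "(\<lambda>n. \<bar>g n x\<bar> / l) \<longlonglongrightarrow> 0" by simp
    then show ?case unfolding v_def
    proof (rule enn2real_F_tendsto_0[rotated 3])
      show "0 \<le> \<bar>g n x\<bar> / l" for n using l by simp
      show "\<bar>g n x\<bar> / l \<le> \<bar>f x\<bar> / l" for n using dom[OF elim(1)] l by (simp add: divide_right_mono)
    qed (use elim(2) in simp_all)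
  qed
  ultimately have "(\<lambda>n. \<rho> (v n)) \<longlonglongrightarrow> 0"
    using oc h_in v unfolding order_continuous_def by blast
  moreover have "CL_modular M \<rho> F (g n) l = \<rho> (v n)" for n
  proof -
    have "AE x in M. F (\<bar>g n x\<bar> / l) \<noteq> \<infinity>"
      using AE_space f_fin by eventually_elim (metis F_le_f top_unique infinity_ennreal_def)
    then show ?thesis by (simp add: CL_modular_def ennfun_norm_def v_def)
  qed
  ultimately show ?thesis by simp
qed

lemma CL_modular_le_1_if_increasing:
  assumes fat: "fatou_property M \<rho>" and l: "0 < l"
    and f: "f \<in> borel_measurable M" and g: "\<And>j. g j \<in> borel_measurable M"
    and inc: "\<And>j x. x \<in> space M \<Longrightarrow> \<bar>g j x\<bar> \<le> \<bar>g (Suc j) x\<bar>"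
    and ev: "\<And>x. x \<in> space M \<Longrightarrow> eventually (\<lambda>j. g j x = f x) sequentially"
    and le_1: "\<And>j. CL_modular M \<rho> F (g j) l \<le> 1"
  shows "CL_modular M \<rho> F f l \<le> 1"
proof -
  define v where "v j = (\<lambda>x. enn2real (F (\<bar>g j x\<bar> / l)))" for j
  define h where "h = (\<lambda>x. enn2real (F (\<bar>f x\<bar> / l)))"
  have modular_fin: "CL_modular M \<rho> F (g j) l \<noteq> \<infinity>" for j using le_1[of j] by (auto simp: top_unique)
  have g_fin: "AE x in M. F (\<bar>g j x\<bar> / l) \<noteq> \<infinity>" and rho_v: "CL_modular M \<rho> F (g j) l = \<rho> (v j)" for j
    using ennfun_norm_finiteD[OF modular_fin[of j, unfolded CL_modular_def]] by (auto simp: CL_modular_def v_def)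
  then have g_fin_all: "AE x in M. \<forall>j. F (\<bar>g j x\<bar> / l) \<noteq> \<infinity>"
    by (simp add: AE_all_countable)
  have f_fin: "AE x in M. F (\<bar>f x\<bar> / l) \<noteq> \<infinity>"
    using AE_space g_fin_all
  proof eventually_elim
    case (elim x)
    from ev[OF elim(1)] obtain j where "g j x = f x" by (auto simp: eventually_sequentially)
    with elim(2) show ?case by metis
  qed
  have v: "v j \<in> borel_measurable M" for j
    unfolding v_def by (intro borel_measurable_enn2real borel_measurable_F_comp) (use g l in auto)
  have h: "h \<in> borel_measurable M"
    unfolding h_def by (intro borel_measurable_enn2real borel_measurable_F_comp) (use f l in auto)
  have "AE x in M. \<forall>j. 0 \<le> v j x \<and> v j x \<le> v (Suc j) x"
    using AE_space g_fin_all
  proof eventually_elim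
    case (elim x)
    have "F (\<bar>g j x\<bar> / l) \<le> F (\<bar>g (Suc j) x\<bar> / l)" for j
      using inc[OF elim(1)] l by (intro F_mono divide_right_mono) auto
    then show ?case using elim(2) by (auto simp: v_def intro!: enn2real_mono simp: less_top)
  qed
  moreover have "AE x in M. (\<lambda>j. v j x) \<longlonglongrightarrow> h x"
    using AE_space
  proof eventually_elim
    case (elim x)
    show ?case unfolding v_def h_def
      by (rule tendsto_eventually) (use ev[OF elim] in \<open>auto elim: eventually_mono\<close>)
  qed
  moreover have "(SUP j. \<rho> (v j)) < \<infinity>"
  proof -
    have "(SUP j. \<rho> (v j)) \<le> 1" using le_1 rho_v by (auto intro!: SUP_least)
    then show ?thesis by (simp add: le_less_trans)
  qed
  ultimately have "(\<lambda>j. \<rho> (v j)) \<longlonglongrightarrow> \<rho> h"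
    using fat h v unfolding fatou_property_def by blast
  then have "\<rho> h \<le> 1"
    by (rule tendsto_upperbound) (use le_1 rho_v in \<open>auto intro!: always_eventually\<close>)
  then show ?thesis using f_fin by (simp add: CL_modular_def ennfun_norm_def h_def)
qed

end

section \<open>Norm-one sequences decreasing to zero\<close>

locale CL_non_order_continuous = ri_orlicz +
  fixes w :: "'a \<Rightarrow> real" and u :: "nat \<Rightarrow> 'a \<Rightarrow> real"
  assumes order_continuous: "order_continuous M \<rho>" and fatou: "fatou_property M \<rho>"
    and w_measurable[measurable]: "w \<in> borel_measurable M"
    and u_measurable[measurable]: "\<And>n. u n \<in> borel_measurable M"
    and u_nonneg: "\<And>n x. x \<in> space M \<Longrightarrow> 0 \<le> u n x"
    and u_le_w: "\<And>n x. x \<in> space M \<Longrightarrow> u n x \<le> w x"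
    and u_decreasing: "\<And>n x. x \<in> space M \<Longrightarrow> u (Suc n) x \<le> u n x"
    and u_tendsto_0: "\<And>x. x \<in> space M \<Longrightarrow> (\<lambda>n. u n x) \<longlonglongrightarrow> 0"
    and w_norm: "CL_norm M \<rho> F w \<le> 1"
    and u_norm: "\<And>n. 1 \<le> CL_norm M \<rho> F (u n)"
begin

lemma w_nonneg: "x \<in> space M \<Longrightarrow> 0 \<le> w x"
  using u_nonneg[of x 0] u_le_w[of x 0] by simp

lemma u_antimono: "x \<in> space M \<Longrightarrow> m \<le> n \<Longrightarrow> u n x \<le> u m x"
  using lift_Suc_antimono_le[of "\<lambda>n. u n x"] u_decreasing by blast

lemma CL_modular_u_infinite:
  assumes l: "0 < l" "l < 1"
  shows "CL_modular M \<rho> F (u k) l = \<infinity>"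
proof (rule ccontr)
  assume fin: "CL_modular M \<rho> F (u k) l \<noteq> \<infinity>"
  have "(\<lambda>n. CL_modular M \<rho> F (u (n + k)) l) \<longlonglongrightarrow> 0"
  proof (rule CL_modular_tendsto_0[OF order_continuous l(1) u_measurable fin u_measurable])
    fix n x assume x: "x \<in> space M"
    show "\<bar>u (n + k) x\<bar> \<le> \<bar>u k x\<bar>" "\<bar>u (Suc n + k) x\<bar> \<le> \<bar>u (n + k) x\<bar>"
      using u_antimono[OF x] u_nonneg[OF x] by simp_all
    show "(\<lambda>n. u (n + k) x) \<longlonglongrightarrow> 0"
      using LIMSEQ_ignore_initial_segment[OF u_tendsto_0[OF x], of k] by simp
  qed
  then have "eventually (\<lambda>n. CL_modular M \<rho> F (u (n + k)) l < 1) sequentially"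
    by (rule order_tendstoD) simp
  then obtain n where "CL_modular M \<rho> F (u (n + k)) l \<le> 1"
    by (auto simp: eventually_sequentially dest: less_imp_le)
  then have "CL_norm M \<rho> F (u (n + k)) \<le> ennreal l"
    using l by (intro CL_norm_le_if_modular_le_1) auto
  also have "\<dots> < 1" using l by simp
  finally show False using u_norm[of "n + k"] by simp
qed

definition u_large :: "nat \<Rightarrow> 'a set" where
  "u_large n = {x \<in> space M. w x / 3 < u n x}"

lemma u_large_sets[measurable]: "u_large n \<in> sets M"
  unfolding u_large_def by measurable

lemma u_large_antimono: "m \<le> n \<Longrightarrow> u_large n \<subseteq> u_large m"
  unfolding u_large_def using u_antimono by fastforce

lemma eventually_not_in_u_large:
  assumes x: "x \<in> space M"
  shows "eventually (\<lambda>n. x \<notin> u_large n) sequentially"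
proof -
  have "\<exists>n. x \<notin> u_large n"
  proof (rule ccontr)
    assume "\<nexists>n. x \<notin> u_large n"
    then have above: "w x / 3 < u n x" for n using x by (auto simp: u_large_def)
    have "0 < w x" using above[of 0] u_le_w[OF x, of 0] by linarith
    moreover have "w x / 3 \<le> 0"
      by (rule tendsto_lowerbound[OF u_tendsto_0[OF x]])
        (use above in \<open>auto intro!: always_eventually less_imp_le\<close>)
    ultimately show False by simp
  qed
  then show ?thesis using u_large_antimono unfolding eventually_sequentially by blast
qed

text \<open>Off \<open>u_large n\<close> we have \<open>u n \<le> w / 3\<close>, and the modular of \<open>w\<close> at any level
  \<open>3 l > 1\<close> is at most \<open>1\<close>; so the infinite modular of \<open>u n\<close> must come from \<open>u_large n\<close>.\<close>

lemma CL_modular_w_on_u_large_infinite: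
  assumes l: "1/3 < l" "l < 1"
  shows "CL_modular M \<rho> F (\<lambda>x. if x \<in> u_large n then w x else 0) l = \<infinity>"
proof (rule ccontr)
  assume fin: "CL_modular M \<rho> F (\<lambda>x. if x \<in> u_large n then w x else 0) l \<noteq> \<infinity>"
  have l_pos: "0 < l" using l by simp
  define u_on where "u_on x = (if x \<in> u_large n then u n x else 0)" for x
  define u_off where "u_off x = (if x \<in> u_large n then 0 else u n x)" for x
  have [measurable]: "u_on \<in> borel_measurable M" "u_off \<in> borel_measurable M"
    unfolding u_on_def u_off_def by measurable
  have "CL_modular M \<rho> F (u n) l \<le> CL_modular M \<rho> F u_on l + CL_modular M \<rho> F u_off l"
  proof -
    have split: "(\<lambda>x. F (\<bar>u n x\<bar> / l)) = (\<lambda>x. F (\<bar>u_on x\<bar> / l) + F (\<bar>u_off x\<bar> / l))"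
      by (auto simp: u_on_def u_off_def F_zero)
    have "(\<lambda>x. F (\<bar>u_on x\<bar> / l)) \<in> borel_measurable M" "(\<lambda>x. F (\<bar>u_off x\<bar> / l)) \<in> borel_measurable M"
      by (rule borel_measurable_F_comp; use l_pos in simp)+
    then show ?thesis unfolding CL_modular_def split by (rule ennfun_norm_add)
  qed
  also have "CL_modular M \<rho> F u_on l \<le> CL_modular M \<rho> F (\<lambda>x. if x \<in> u_large n then w x else 0) l"
    by (rule CL_modular_mono)
      (use u_le_w u_nonneg l_pos in \<open>auto simp: u_on_def intro!: divide_right_mono order.trans[OF _ abs_ge_self]\<close>)
  also have "CL_modular M \<rho> F u_off l \<le> CL_modular M \<rho> F w (3 * l)"
  proof (rule CL_modular_mono)
    fix x assume x: "x \<in> space M"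
    show "\<bar>u_off x\<bar> / l \<le> \<bar>w x\<bar> / (3 * l)"
      using x u_nonneg[OF x] w_nonneg[OF x] l_pos
      by (auto simp: u_off_def u_large_def field_simps)
  qed (use l_pos in auto)
  also have "\<dots> \<le> 1"
    by (rule CL_modular_le_1_if_norm_le_1[OF w_measurable w_norm]) (use l in auto)
  finally have "CL_modular M \<rho> F (u n) l \<noteq> \<infinity>"
    using fin by (auto simp: top_unique ennreal_add_eq_top)
  then show False using CL_modular_u_infinite[of l n] l by simp
qed

text \<open>If every piece had modular at most \<open>1\<close>, the Fatou property would bound the modular of
  \<open>w\<close> on \<open>u_large J\<close> by \<open>1\<close>.\<close>

lemma exists_large_piece:
  assumes l: "1/3 < l" "l < 1"
  shows "\<exists>J' > J. 1 < CL_modular M \<rho> F (\<lambda>x. if x \<in> u_large J - u_large J' then w x else 0) l"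
proof (rule ccontr)
  assume no_piece: "\<not> ?thesis"
  define g where "g j x = (if x \<in> u_large J - u_large (J + Suc j) then w x else 0)" for j x
  have "CL_modular M \<rho> F (\<lambda>x. if x \<in> u_large J then w x else 0) l \<le> 1"
  proof (rule CL_modular_le_1_if_increasing[OF fatou, where g=g])
    show "0 < l" using l by simp
    show "(\<lambda>x. if x \<in> u_large J then w x else 0) \<in> borel_measurable M" "g j \<in> borel_measurable M" for j
      unfolding g_def by measurable
    have "CL_modular M \<rho> F (\<lambda>x. if x \<in> u_large J - u_large J' then w x else 0) l \<le> 1"
      if "J < J'" for J'
      using no_piece that by (meson leI)
    then show "CL_modular M \<rho> F (g j) l \<le> 1" for j unfolding g_def by simp
    fix j x assume x: "x \<in> space M"
    have "u_large (J + Suc (Suc j)) \<subseteq> u_large (J + Suc j)" by (rule u_large_antimono) simp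
    then show "\<bar>g j x\<bar> \<le> \<bar>g (Suc j) x\<bar>" using w_nonneg[OF x] by (auto simp: g_def)
    obtain N where N: "\<And>m. N \<le> m \<Longrightarrow> x \<notin> u_large m"
      using eventually_not_in_u_large[OF x] unfolding eventually_sequentially by blast
    have "eventually (\<lambda>j. x \<notin> u_large (J + Suc j)) sequentially"
      unfolding eventually_sequentially by (rule exI[of _ N]) (simp add: N)
    then show "eventually (\<lambda>j. g j x = (if x \<in> u_large J then w x else 0)) sequentially"
      by eventually_elim (simp add: g_def)
  qed
  then show False using CL_modular_w_on_u_large_infinite[OF l, of J] by (simp add: top_unique)
qed

lemma disjoint_large_pieces:
  fixes L :: "nat \<Rightarrow> real"
  assumes L: "\<And>j. 1/3 < L j" "\<And>j. L j < 1"
  obtains P where "\<And>j. P j \<in> sets M" "disjoint_family P"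
    "\<And>j. 1 < CL_modular M \<rho> F (\<lambda>x. if x \<in> P j then w x else 0) (L j)"
proof -
  have "\<forall>j J. \<exists>J' > J. 1 < CL_modular M \<rho> F (\<lambda>x. if x \<in> u_large J - u_large J' then w x else 0) (L j)"
    using exists_large_piece[OF L] by blast
  then obtain next_index where next_index: "\<And>j J. J < next_index j J \<and>
      1 < CL_modular M \<rho> F (\<lambda>x. if x \<in> u_large J - u_large (next_index j J) then w x else 0) (L j)"
    by metis
  define n where "n = rec_nat 0 next_index"
  have n_Suc: "n (Suc j) = next_index j (n j)" for j by (simp add: n_def)
  have "strict_mono n"
    unfolding strict_mono_Suc_iff using next_index by (simp add: n_Suc)
  define P where "P j = u_large (n j) - u_large (n (Suc j))" for j
  have disjoint_less: "P i \<inter> P j = {}" if "i < j" for i j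
  proof -
    have "n (Suc i) \<le> n j" using \<open>strict_mono n\<close> that by (simp add: strict_mono_less_eq)
    then have "u_large (n j) \<subseteq> u_large (n (Suc i))" by (rule u_large_antimono)
    then show ?thesis by (auto simp: P_def)
  qed
  have "disjoint_family P"
    unfolding disjoint_family_on_def
  proof (intro ballI impI)
    fix i j :: nat assume "i \<noteq> j"
    then consider "i < j" | "j < i" by linarith
    then show "P i \<inter> P j = {}" by cases (use disjoint_less in \<open>auto simp: Int_commute\<close>)
  qed
  show thesis
  proof (rule that)
    show "P j \<in> sets M" for j unfolding P_def by measurable
    show "1 < CL_modular M \<rho> F (\<lambda>x. if x \<in> P j then w x else 0) (L j)" for j
      using next_index[where j=j and J="n j"] unfolding P_def by (simp add: n_Suc)
  qed fact
qed

theorem lattice_iso_linfty_CL_norm: "lattice_iso_linfty M (CL_norm M \<rho> F)"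
proof -
  define L where "L j = 1 - 1 / (real j + 2)" for j
  have L_bounds: "1/3 < L j" "L j < 1" for j by (auto simp: L_def field_simps)
  obtain P where P: "\<And>j. P j \<in> sets M" "disjoint_family P"
    and piece: "\<And>j. 1 < CL_modular M \<rho> F (\<lambda>x. if x \<in> P j then w x else 0) (L j)"
    using disjoint_large_pieces[of L, OF L_bounds] by blast
  have L_pos: "0 < L j" for j using L_bounds(1)[of j] by simp
  have "L \<longlonglongrightarrow> 1 - 0"
    unfolding L_def
    using LIMSEQ_ignore_initial_segment[OF lim_1_over_n, of 2]
    by (intro tendsto_intros) (simp add: add.commute)
  then show ?thesis
    using lattice_iso_linfty_of_disjoint_pieces[OF w_measurable w_nonneg w_norm P L_pos _ piece] by simp
qed

end

section \<open>From the Cesaro space back to \<open>X\<^sub>F\<close>\<close>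

lemma bounded_range_if_abs_le: "(\<And>n. \<bar>a n\<bar> \<le> B) \<Longrightarrow> bounded (range (a :: nat \<Rightarrow> real))"
  unfolding bounded_iff by auto

text \<open>The images \<open>f k = T e\<^sub>k\<close> of the unit vectors and \<open>g = T 1\<close> of the constant sequence.\<close>

lemma lattice_iso_linfty_disjoint_sequence:
  assumes "lattice_iso_linfty M N"
  obtains f g where "\<And>k::nat. f k \<in> borel_measurable M" "g \<in> borel_measurable M"
    "\<And>k. N (f k) = 1" "N g = 1"
    "AE x in M. \<forall>k. 0 \<le> f k x \<and> f k x \<le> g x"
    "AE x in M. \<forall>j k. j \<noteq> k \<longrightarrow> f j x = 0 \<or> f k x = 0"
proof -
  obtain T :: "(nat \<Rightarrow> real) \<Rightarrow> 'a \<Rightarrow> real" where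
    T_norm: "\<And>a. bounded (range a) \<Longrightarrow> T a \<in> borel_measurable M \<and> N (T a) = ennreal (SUP n. \<bar>a n\<bar>)"
    and T_add: "\<And>a b. bounded (range a) \<Longrightarrow> bounded (range b) \<Longrightarrow>
      AE x in M. T (\<lambda>n. a n + b n) x = T a x + T b x"
    and T_scale: "\<And>a c. bounded (range a) \<Longrightarrow> AE x in M. T (\<lambda>n. c * a n) x = c * T a x"
    and T_max: "\<And>a b. bounded (range a) \<Longrightarrow> bounded (range b) \<Longrightarrow>
      AE x in M. T (\<lambda>n. max (a n) (b n)) x = max (T a x) (T b x)"
    using assms unfolding lattice_iso_linfty_def by blast
  define e where "e k n = (if n = k then 1 else (0::real))" for k n :: nat
  have e_bounded: "bounded (range (e k))" for k by (rule bounded_range_if_abs_le[of _ 1]) (simp add: e_def)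
  have one_bounded: "bounded (range (\<lambda>n::nat. 1::real))" by (rule bounded_range_if_abs_le[of _ 1]) simp
  have zero_bounded: "bounded (range (\<lambda>n::nat. 0::real))" by (rule bounded_range_if_abs_le[of _ 0]) simp
  have T_nonneg: "AE x in M. 0 \<le> T a x" if a: "bounded (range a)" "\<And>n. 0 \<le> a n" for a
  proof -
    have max_0: "(\<lambda>n. max (a n) 0) = a" using a(2) by (simp add: max_absorb1)
    show ?thesis using T_max[OF a(1) zero_bounded] T_scale[OF one_bounded, of 0]
      by eventually_elim (simp add: max_0)
  qed
  define f where "f k = T (e k)" for k
  define g where "g = T (\<lambda>n. 1)"
  have f_le_g: "AE x in M. 0 \<le> f k x \<and> f k x \<le> g x" for k
  proof -
    have rest_bounded: "bounded (range (\<lambda>n. 1 - e k n))"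
      by (rule bounded_range_if_abs_le[of _ 1]) (simp add: e_def)
    have "AE x in M. g x = f k x + T (\<lambda>n. 1 - e k n) x"
      using T_add[OF e_bounded[of k] rest_bounded] by (simp add: g_def f_def)
    moreover have "AE x in M. 0 \<le> T (\<lambda>n. 1 - e k n) x" by (rule T_nonneg[OF rest_bounded]) (simp add: e_def)
    moreover have "AE x in M. 0 \<le> f k x" unfolding f_def by (rule T_nonneg[OF e_bounded]) (simp add: e_def)
    ultimately show ?thesis by eventually_elim simp
  qed
  have f_disjoint: "AE x in M. j \<noteq> k \<longrightarrow> f j x = 0 \<or> f k x = 0" for j k
  proof (cases "j = k")
    case False
    then have max_eq_add: "(\<lambda>n. max (e j n) (e k n)) = (\<lambda>n. e j n + e k n)" by (auto simp: e_def)
    have "AE x in M. f j x + f k x = max (f j x) (f k x)"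
      using T_add[OF e_bounded[of j] e_bounded[of k]] T_max[OF e_bounded[of j] e_bounded[of k]]
      by eventually_elim (simp add: f_def max_eq_add)
    then show ?thesis using f_le_g[of j] f_le_g[of k] by eventually_elim (auto simp: max_def split: if_splits)
  qed simp
  have SUP_e: "(SUP n. \<bar>e k n\<bar>) = 1" for k
  proof (rule antisym)
    show "(SUP n. \<bar>e k n\<bar>) \<le> 1" by (rule cSUP_least) (auto simp: e_def)
    have "\<bar>e k k\<bar> \<le> (SUP n. \<bar>e k n\<bar>)"
      by (rule cSUP_upper) (auto intro!: bdd_aboveI[of _ 1] simp: e_def)
    then show "1 \<le> (SUP n. \<bar>e k n\<bar>)" by (simp add: e_def)
  qed
  have "f k \<in> borel_measurable M" for k using T_norm[OF e_bounded] by (simp add: f_def)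
  moreover have "g \<in> borel_measurable M" using T_norm[OF one_bounded] by (simp add: g_def)
  moreover have "N (f k) = 1" for k using T_norm[OF e_bounded, of k] SUP_e by (simp add: f_def)
  moreover have "N g = 1" using T_norm[OF one_bounded] by (simp add: g_def)
  moreover have "AE x in M. \<forall>k. 0 \<le> f k x \<and> f k x \<le> g x"
    using f_le_g by (simp add: AE_all_countable)
  moreover have "AE x in M. \<forall>j k. j \<noteq> k \<longrightarrow> f j x = 0 \<or> f k x = 0"
    using f_disjoint by (simp add: AE_all_countable)
  ultimately show thesis by (rule that)
qed

text \<open>The tails \<open>r n\<close> of \<open>g\<close> beyond the supports of \<open>f n, f (n + 1), \<dots>\<close> decrease to \<open>0\<close>
  because each point lies in the support of at most one \<open>f k\<close>.\<close>

lemma disjoint_sequence_tails: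
  fixes f :: "nat \<Rightarrow> 'a \<Rightarrow> real"
  assumes f[measurable]: "\<And>k. f k \<in> borel_measurable M" and g[measurable]: "g \<in> borel_measurable M"
    and f_le_g: "AE x in M. \<forall>k. 0 \<le> f k x \<and> f k x \<le> g x"
    and f_disjoint: "AE x in M. \<forall>j k. j \<noteq> k \<longrightarrow> f j x = 0 \<or> f k x = 0"
  obtains r where "\<And>n. r n \<in> borel_measurable M"
    "\<And>n x. \<bar>r n x\<bar> \<le> \<bar>g x\<bar>" "\<And>n x. \<bar>r (Suc n) x\<bar> \<le> \<bar>r n x\<bar>"
    "AE x in M. (\<lambda>n. r n x) \<longlonglongrightarrow> 0" "\<And>n. AE x in M. \<bar>f n x\<bar> \<le> \<bar>r n x\<bar>"
proof -
  define A where "A n = {x \<in> space M. \<exists>k \<ge> n. 0 < f k x}" for n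
  have [measurable]: "A n \<in> sets M" for n unfolding A_def by measurable
  define r where "r n x = (if x \<in> A n then g x else 0)" for n x
  show thesis
  proof (rule that[of r])
  show "r n \<in> borel_measurable M" for n unfolding r_def by measurable
  show "\<bar>r n x\<bar> \<le> \<bar>g x\<bar>" for n x by (simp add: r_def)
  have "A (Suc n) \<subseteq> A n" for n by (auto simp: A_def intro: Suc_leD)
  then show "\<bar>r (Suc n) x\<bar> \<le> \<bar>r n x\<bar>" for n x by (auto simp: r_def)
  show "AE x in M. (\<lambda>n. r n x) \<longlonglongrightarrow> 0"
    using f_disjoint
  proof eventually_elim
    case (elim x)
    show ?case
    proof (cases "\<exists>k. 0 < f k x")
      case True
      then obtain k where k: "0 < f k x" by blast
      have "x \<notin> A n" if "k < n" for n
      proof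
        assume "x \<in> A n"
        then obtain k' where "n \<le> k'" "0 < f k' x" by (auto simp: A_def)
        moreover have "k' \<noteq> k" using that \<open>n \<le> k'\<close> by simp
        ultimately show False using elim k by fastforce
      qed
      then have "eventually (\<lambda>n. r n x = 0) sequentially"
        unfolding eventually_sequentially r_def by (intro exI[of _ "Suc k"]) simp
      then show ?thesis by (rule tendsto_eventually)
    next
      case False
      then have "r n x = 0" for n by (auto simp: r_def A_def)
      then show ?thesis by simp
    qed
  qed
  show "AE x in M. \<bar>f n x\<bar> \<le> \<bar>r n x\<bar>" for n
    using AE_space f_le_g
  proof eventually_elim
    case (elim x)
    show ?case
    proof (cases "0 < f n x")
      case True
      then have "x \<in> A n" using elim(1) by (auto simp: A_def)
      then show ?thesis using elim(2) by (auto simp: r_def intro: order.trans[OF _ abs_ge_self])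
    qed (use elim(2) in \<open>simp add: r_def\<close>)
  qed
  qed
qed

locale cesaro_like_operator =
  fixes M :: "'a measure" and C :: "('a \<Rightarrow> real) \<Rightarrow> 'a \<Rightarrow> ennreal"
  assumes operator_mono: "\<And>f g x. f \<in> borel_measurable M \<Longrightarrow> g \<in> borel_measurable M \<Longrightarrow>
      (AE x in M. \<bar>f x\<bar> \<le> \<bar>g x\<bar>) \<Longrightarrow> x \<in> space M \<Longrightarrow> C f x \<le> C g x"
    and operator_measurable: "\<And>f. f \<in> borel_measurable M \<Longrightarrow> C f \<in> borel_measurable M"
    and operator_dominated_convergence: "\<And>g r x. g \<in> borel_measurable M \<Longrightarrow>
      (\<And>n. r n \<in> borel_measurable M) \<Longrightarrow> (AE x in M. \<forall>n. \<bar>r n x\<bar> \<le> \<bar>g x\<bar>) \<Longrightarrow>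
      (AE x in M. (\<lambda>n. r n x) \<longlonglongrightarrow> 0) \<Longrightarrow> x \<in> space M \<Longrightarrow> C g x < \<infinity> \<Longrightarrow>
      (\<lambda>n. C (r n) x) \<longlonglongrightarrow> 0"
begin

text \<open>Cutting off \<open>C (r n)\<close> on the null set where \<open>C g = \<infinity>\<close> keeps the real-valued
  sequence below \<open>enn2real (C g)\<close> and decreasing.\<close>

lemma CL_non_order_continuous_cesaro_tails:
  assumes "ri_space M \<rho>" "orlicz F" "order_continuous M \<rho>" "fatou_property M \<rho>"
    and f: "\<And>n. f n \<in> borel_measurable M" and g: "g \<in> borel_measurable M"
    and r: "\<And>n. r n \<in> borel_measurable M"
    and f_norm: "\<And>n. ennfun_norm M (CL_norm M \<rho> F) (C (f n)) = 1"
    and g_norm: "ennfun_norm M (CL_norm M \<rho> F) (C g) = 1"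
    and r_le_g: "\<And>n x. \<bar>r n x\<bar> \<le> \<bar>g x\<bar>" and r_decreasing: "\<And>n x. \<bar>r (Suc n) x\<bar> \<le> \<bar>r n x\<bar>"
    and r_tendsto_0: "AE x in M. (\<lambda>n. r n x) \<longlonglongrightarrow> 0"
    and f_le_r: "\<And>n. AE x in M. \<bar>f n x\<bar> \<le> \<bar>r n x\<bar>"
  shows "CL_non_order_continuous M \<rho> F (\<lambda>x. enn2real (C g x))
    (\<lambda>n x. if C g x = \<infinity> then 0 else enn2real (C (r n) x))"
    (is "CL_non_order_continuous M \<rho> F _ ?U")
proof -
  interpret ri_orlicz M \<rho> F using assms(1,2) by unfold_locales
  have [measurable]: "C g \<in> borel_measurable M" "C (r n) \<in> borel_measurable M" for n
    using g r by (simp_all add: operator_measurable)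
  have Cg_finite: "AE x in M. C g x \<noteq> \<infinity>" and W_norm: "CL_norm M \<rho> F (\<lambda>x. enn2real (C g x)) = 1"
    using g_norm by (auto simp: ennfun_norm_def split: if_splits)
  have Cr_le_Cg: "C (r n) x \<le> C g x" if "x \<in> space M" for n x
    by (rule operator_mono[OF r g _ that]) (simp add: r_le_g)
  show ?thesis
  proof unfold_locales
    show "order_continuous M \<rho>" "fatou_property M \<rho>" using assms by simp_all
    show "(\<lambda>x. enn2real (C g x)) \<in> borel_measurable M" "?U n \<in> borel_measurable M" for n
      by measurable
    show "CL_norm M \<rho> F (\<lambda>x. enn2real (C g x)) \<le> 1" using W_norm by simp
    fix n x assume x: "x \<in> space M"
    show "0 \<le> ?U n x" by simp
    show "?U n x \<le> enn2real (C g x)"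
      using Cr_le_Cg[OF x, of n] by (auto intro!: enn2real_mono simp: less_top)
    have "C (r (Suc n)) x \<le> C (r n) x" by (rule operator_mono[OF r r _ x]) (simp add: r_decreasing)
    then show "?U (Suc n) x \<le> ?U n x"
      using Cr_le_Cg[OF x, of n] by (auto intro!: enn2real_mono simp: less_top top_unique)
    show "(\<lambda>n. ?U n x) \<longlonglongrightarrow> 0"
    proof (cases "C g x = \<infinity>")
      case False
      then have "(\<lambda>n. C (r n) x) \<longlonglongrightarrow> ennreal 0"
        using operator_dominated_convergence[OF g r _ r_tendsto_0 x] r_le_g by (simp add: less_top)
      then have "(\<lambda>n. enn2real (C (r n) x)) \<longlonglongrightarrow> 0" by (rule tendsto_enn2real) simp
      then show ?thesis using False by simp
    qed simp
  next
    fix n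
    have Cr_finite: "AE x in M. C (r n) x \<noteq> \<infinity>"
      using AE_space Cg_finite by eventually_elim (metis Cr_le_Cg top_unique infinity_ennreal_def)
    have "1 = ennfun_norm M (CL_norm M \<rho> F) (C (f n))" using f_norm by simp
    also have "\<dots> \<le> ennfun_norm M (CL_norm M \<rho> F) (C (r n))"
    proof (rule ennfun_norm_mono[OF CL_norm_mono])
      show "AE x in M. C (f n) x \<le> C (r n) x" by (rule AE_I2) (rule operator_mono[OF f r f_le_r])
    qed (use f r in \<open>simp_all add: operator_measurable\<close>)
    also have "\<dots> = CL_norm M \<rho> F (\<lambda>x. enn2real (C (r n) x))"
      using Cr_finite by (simp add: ennfun_norm_def)
    also have "\<dots> = CL_norm M \<rho> F (?U n)"
      by (rule CL_norm_cong) (use Cg_finite in \<open>auto elim: AE_mp\<close>)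
    finally show "1 \<le> CL_norm M \<rho> F (?U n)" .
  qed
qed

theorem lattice_iso_linfty_of_cesaro_space:
  assumes "ri_space M \<rho>" "orlicz F" "order_continuous M \<rho>" "fatou_property M \<rho>"
    and "lattice_iso_linfty M (cesaro_norm M C (CL_norm M \<rho> F))"
  shows "lattice_iso_linfty M (CL_norm M \<rho> F)"
proof -
  obtain f :: "nat \<Rightarrow> 'a \<Rightarrow> real" and g where f: "\<And>k. f k \<in> borel_measurable M"
    and g: "g \<in> borel_measurable M"
    and f_norm: "\<And>k. ennfun_norm M (CL_norm M \<rho> F) (C (f k)) = 1"
    and g_norm: "ennfun_norm M (CL_norm M \<rho> F) (C g) = 1"
    and f_le_g: "AE x in M. \<forall>k. 0 \<le> f k x \<and> f k x \<le> g x"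
    and f_disjoint: "AE x in M. \<forall>j k. j \<noteq> k \<longrightarrow> f j x = 0 \<or> f k x = 0"
    by (rule lattice_iso_linfty_disjoint_sequence[OF assms(5)[unfolded cesaro_norm_def]]) blast
  obtain r where r: "\<And>n. r n \<in> borel_measurable M"
    and tails: "\<And>n x. \<bar>r n x\<bar> \<le> \<bar>g x\<bar>" "\<And>n x. \<bar>r (Suc n) x\<bar> \<le> \<bar>r n x\<bar>"
      "AE x in M. (\<lambda>n. r n x) \<longlonglongrightarrow> 0" "\<And>n. AE x in M. \<bar>f n x\<bar> \<le> \<bar>r n x\<bar>"
    by (rule disjoint_sequence_tails[OF f g f_le_g f_disjoint]) blast
  interpret CL_non_order_continuous M \<rho> F "\<lambda>x. enn2real (C g x)"
    "\<lambda>n x. if C g x = \<infinity> then 0 else enn2real (C (r n) x)"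
    by (rule CL_non_order_continuous_cesaro_tails[OF assms(1-4) f g r f_norm g_norm tails])
  show ?thesis by (rule lattice_iso_linfty_CL_norm)
qed

end

section \<open>The Cesaro operators\<close>

lemma cesaro_like_operator_cesaro_seq: "cesaro_like_operator (count_space UNIV) cesaro_seq"
proof
  fix f g :: "nat \<Rightarrow> real" and n :: nat
  assume "AE k in count_space UNIV. \<bar>f k\<bar> \<le> \<bar>g k\<bar>"
  then have "\<bar>f k\<bar> \<le> \<bar>g k\<bar>" for k by (simp add: AE_count_space)
  then show "cesaro_seq f n \<le> cesaro_seq g n"
    unfolding cesaro_seq_def by (intro ennreal_leI divide_right_mono sum_mono) simp_all
next
  fix g :: "nat \<Rightarrow> real" and r :: "nat \<Rightarrow> nat \<Rightarrow> real" and n :: nat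
  assume "AE k in count_space UNIV. (\<lambda>m. r m k) \<longlonglongrightarrow> 0"
  then have "(\<lambda>m. r m k) \<longlonglongrightarrow> 0" for k by (simp add: AE_count_space)
  then have "(\<lambda>m. (\<Sum>k\<le>n. \<bar>r m k\<bar>) / real (Suc n)) \<longlonglongrightarrow> (\<Sum>k\<le>n. \<bar>0\<bar>) / real (Suc n)"
    by (intro tendsto_intros) simp_all
  then have "(\<lambda>m. ennreal ((\<Sum>k\<le>n. \<bar>r m k\<bar>) / real (Suc n))) \<longlonglongrightarrow> ennreal 0"
    by (intro tendsto_ennrealI) simp
  then show "(\<lambda>m. cesaro_seq (r m) n) \<longlonglongrightarrow> 0" by (simp add: cesaro_seq_def)
qed simp

context
  fixes S :: "real set"
  assumes S: "S \<in> sets lebesgue" and S_pos: "S \<subseteq> {0<..}"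
    and S_initial: "\<And>x. x \<in> S \<Longrightarrow> {0<..x} \<subseteq> S"
begin

lemma AE_restrict_lebesgue_iff:
  "(AE x in restrict_space lebesgue S. P x) \<longleftrightarrow> (AE x in lebesgue. x \<in> S \<longrightarrow> P x)"
  by (rule AE_restrict_space_iff) (use S in simp)

lemma cesaro_fun_mono:
  assumes "AE x in restrict_space lebesgue S. \<bar>f x\<bar> \<le> \<bar>g x\<bar>" and x: "x \<in> S"
  shows "cesaro_fun f x \<le> cesaro_fun g x"
proof -
  have "AE t in lebesgue. t \<in> S \<longrightarrow> \<bar>f t\<bar> \<le> \<bar>g t\<bar>" using assms(1) by (simp add: AE_restrict_lebesgue_iff)
  then have "AE t in lebesgue. ennreal \<bar>f t\<bar> * indicator {0<..x} t \<le> ennreal \<bar>g t\<bar> * indicator {0<..x} t"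
  proof eventually_elim
    case (elim t)
    then show ?case using S_initial[OF x] by (cases "t \<in> {0<..x}") (auto intro: ennreal_leI)
  qed
  then have "(\<integral>\<^sup>+ t. ennreal \<bar>f t\<bar> * indicator {0<..x} t \<partial>lebesgue) \<le>
      (\<integral>\<^sup>+ t. ennreal \<bar>g t\<bar> * indicator {0<..x} t \<partial>lebesgue)"
    by (rule nn_integral_mono_AE)
  then show ?thesis unfolding cesaro_fun_def by (rule divide_right_mono_ennreal)
qed

lemma borel_measurable_cesaro_fun: "cesaro_fun f \<in> borel_measurable (restrict_space lebesgue S)"
proof -
  define I where "I x = (\<integral>\<^sup>+ t. ennreal \<bar>f t\<bar> * indicator {0<..x} t \<partial>lebesgue)" for x
  have "mono I"
    unfolding I_def by (intro monoI nn_integral_mono) (auto intro!: mult_left_mono simp: indicator_def)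
  then have "I \<in> borel_measurable borel" by (rule borel_measurable_mono_real)
  moreover have "(\<lambda>x::real. x) \<in> borel_measurable (restrict_space lebesgue S)"
    by (rule measurable_restrict_space1) (use id_borel_measurable_lebesgue in \<open>simp add: id_def\<close>)
  ultimately have "(\<lambda>x. I x / ennreal x) \<in> borel_measurable (restrict_space lebesgue S)"
    by measurable
  then show ?thesis by (simp add: cesaro_fun_def[abs_def] I_def)
qed

lemma borel_measurable_integrand_on_interval:
  assumes r: "r \<in> borel_measurable (restrict_space lebesgue S)" and x: "x \<in> S"
  shows "(\<lambda>t. ennreal \<bar>r t\<bar> * indicator {0<..x} t) \<in> borel_measurable lebesgue"
proof -
  have "(\<lambda>t. if t \<in> S then r t else 0) \<in> borel_measurable lebesgue"
    using r by (subst (asm) measurable_restrict_space_iff) (use S in auto)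
  moreover have "{0<..x} \<in> sets lebesgue" by (rule sets_completionI_sets) simp
  ultimately have "(\<lambda>t. ennreal \<bar>if t \<in> S then r t else 0\<bar> * indicator {0<..x} t) \<in> borel_measurable lebesgue"
    by measurable
  also have "(\<lambda>t. ennreal \<bar>if t \<in> S then r t else 0\<bar> * indicator {0<..x} t) = (\<lambda>t. ennreal \<bar>r t\<bar> * indicator {0<..x} t)"
    using S_initial[OF x] by (auto simp: indicator_def fun_eq_iff)
  finally show ?thesis .
qed

lemma cesaro_fun_tendsto_0:
  assumes g: "g \<in> borel_measurable (restrict_space lebesgue S)"
    and r: "\<And>n. r n \<in> borel_measurable (restrict_space lebesgue S)"
    and r_le_g: "AE x in restrict_space lebesgue S. \<forall>n. \<bar>r n x\<bar> \<le> \<bar>g x\<bar>"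
    and r_tendsto_0: "AE x in restrict_space lebesgue S. (\<lambda>n. r n x) \<longlonglongrightarrow> 0"
    and x: "x \<in> S" and Cg_finite: "cesaro_fun g x < \<infinity>"
  shows "(\<lambda>n. cesaro_fun (r n) x) \<longlonglongrightarrow> 0"
proof -
  have x_pos: "0 < x" using S_pos x by auto
  have lim: "(\<lambda>n. \<integral>\<^sup>+ t. ennreal \<bar>r n t\<bar> * indicator {0<..x} t \<partial>lebesgue) \<longlonglongrightarrow> (\<integral>\<^sup>+ t. 0 \<partial>(lebesgue :: real measure))"
  proof (rule nn_integral_dominated_convergence[where w="\<lambda>t. ennreal \<bar>g t\<bar> * indicator {0<..x} t"
        and u="\<lambda>n t. ennreal \<bar>r n t\<bar> * indicator {0<..x} t" and u'="\<lambda>t. 0"])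
    show "\<And>n. (\<lambda>t. ennreal \<bar>r n t\<bar> * indicator {0<..x} t) \<in> borel_measurable lebesgue"
      by (rule borel_measurable_integrand_on_interval[OF r x])
    show "(\<lambda>t. ennreal \<bar>g t\<bar> * indicator {0<..x} t) \<in> borel_measurable lebesgue"
      by (rule borel_measurable_integrand_on_interval[OF g x])
    show "(\<lambda>t. 0::ennreal) \<in> borel_measurable lebesgue" by simp
    show "AE t in lebesgue. ennreal \<bar>r n t\<bar> * indicator {0<..x} t \<le> ennreal \<bar>g t\<bar> * indicator {0<..x} t" for n
      using r_le_g[unfolded AE_restrict_lebesgue_iff]
    proof eventually_elim
      case (elim t)
      then show ?case using S_initial[OF x] by (cases "t \<in> {0<..x}") (auto intro: ennreal_leI)
    qed
    have "(\<integral>\<^sup>+ t. ennreal \<bar>g t\<bar> * indicator {0<..x} t \<partial>lebesgue) \<noteq> \<infinity>"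
      using Cg_finite x_pos by (auto simp: cesaro_fun_def ennreal_top_divide)
    then show "(\<integral>\<^sup>+ t. ennreal \<bar>g t\<bar> * indicator {0<..x} t \<partial>lebesgue) < \<infinity>"
      by (simp add: less_top)
    show "AE t in lebesgue. (\<lambda>n. ennreal \<bar>r n t\<bar> * indicator {0<..x} t) \<longlonglongrightarrow> 0"
      using r_tendsto_0[unfolded AE_restrict_lebesgue_iff]
    proof eventually_elim
      case (elim t)
      show ?case
      proof (cases "t \<in> {0<..x}")
        case True
        then have "t \<in> S" using S_initial[OF x] by auto
        then have "(\<lambda>n. r n t) \<longlonglongrightarrow> 0" using elim by simp
        then have "(\<lambda>n. ennreal \<bar>r n t\<bar>) \<longlonglongrightarrow> ennreal \<bar>0\<bar>"
          by (intro tendsto_ennrealI tendsto_intros)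
        then show ?thesis using True by simp
      qed simp
    qed
  qed
  then have lim0: "(\<lambda>n. \<integral>\<^sup>+ t. ennreal \<bar>r n t\<bar> * indicator {0<..x} t \<partial>lebesgue) \<longlonglongrightarrow> 0" by simp
  have inv: "inverse (ennreal x) < top" using x_pos by (simp add: ennreal_inverse_positive less_top[symmetric])
  have "(\<lambda>n. inverse (ennreal x) * (\<integral>\<^sup>+ t. ennreal \<bar>r n t\<bar> * indicator {0<..x} t \<partial>lebesgue)) \<longlonglongrightarrow> inverse (ennreal x) * 0"
    by (rule ennreal_tendsto_cmult[OF inv lim0])
  then show ?thesis by (simp add: cesaro_fun_def divide_ennreal_def mult.commute)
qed

lemma cesaro_like_operator_cesaro_fun: "cesaro_like_operator (restrict_space lebesgue S) cesaro_fun"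
  by unfold_locales
    (auto intro: cesaro_fun_mono borel_measurable_cesaro_fun cesaro_fun_tendsto_0 simp: space_restrict_space)

end

text \<open>The proof does not use the boundedness of \<open>C\<close> on \<open>X\<^sub>F\<close>.\<close>

theorem theorem4p5:
  shows
   "(\<forall>M \<in> {restrict_space lebesgue {0<..<1::real}, restrict_space lebesgue {0::real<..}}.
      \<forall>\<rho> F. ri_space M \<rho> \<and> order_continuous M \<rho> \<and> fatou_property M \<rho> \<and> orlicz F \<and>
        cesaro_bounded M cesaro_fun (CL_norm M \<rho> F) \<and>
        lattice_iso_linfty M (cesaro_norm M cesaro_fun (CL_norm M \<rho> F))
        \<longrightarrow> lattice_iso_linfty M (CL_norm M \<rho> F)) \<and>
    (\<forall>\<rho> F. ri_space (count_space UNIV) \<rho> \<and> order_continuous (count_space UNIV) \<rho> \<and>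
        fatou_property (count_space UNIV) \<rho> \<and> orlicz F \<and>
        cesaro_bounded (count_space UNIV) cesaro_seq (CL_norm (count_space UNIV) \<rho> F) \<and>
        lattice_iso_linfty (count_space UNIV)
          (cesaro_norm (count_space UNIV) cesaro_seq (CL_norm (count_space UNIV) \<rho> F))
        \<longrightarrow> lattice_iso_linfty (count_space UNIV) (CL_norm (count_space UNIV) \<rho> F))"
proof -
  have "{0<..<1::real} \<in> sets lebesgue" "{0::real<..} \<in> sets lebesgue"
    by (rule sets_completionI_sets; simp)+
  then have "cesaro_like_operator (restrict_space lebesgue {0<..<1::real}) cesaro_fun"
    "cesaro_like_operator (restrict_space lebesgue {0::real<..}) cesaro_fun"
    by (auto intro!: cesaro_like_operator_cesaro_fun)
  with cesaro_like_operator_cesaro_seq show ?thesis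
    by (auto intro: cesaro_like_operator.lattice_iso_linfty_of_cesaro_space)
qed

end
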